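(* In an $m$-partial SCS, let $p$ and $p'$ be the positions of two robots $u$ and $u'$ lying in different rings $r$ and $r'$, respectively, and let $c$ be a crossing point between $r$ and $r'$. Let $d$ and $d'$ be the lengths of the simple paths from $p$ to $c$ in $r$ and from $p'$ to $c$ in $r'$, respectively, and let $2l\pi$ and $2l'\pi$ be the lengths of $r$ and $r'$ ($l,l'$ positive integers). Then: (1) $d-d'\in 2\pi\mathbb{Z}$; (2) writing $d-d'=2\pi s$ with $s\in\mathbb{Z}$, the robots $u$ and $u'$ prevent each other from starving if and only if $\gcd(l,l')$ divides $s$.
   Context: Let $T=\{C_1,\dots,C_n\}$ be pairwise disjoint unit circles in the plane (trajectories) and $\epsilon<0.5$ a communication range. The graph of potential links $G_\epsilon(T)$ has the circle centers as nodes and an edge $\{i,j\}$ whenever the centers of $C_i,C_j$ are at distance at most $2+\epsilon$; it is assumed connected. Points of a circle are identified with angles (modulo $2\pi$), and a robot traverses a circle in one time unit. A schedule is a pair $(f,g)$, $f:T\to[0,2\pi)$, $g:T\to\{-1,1\}$ ($1$ = counterclockwise); the robot on $C_i$ is at angle $f(C_i)+2\pi g(C_i)t$ at time $t$. A communication graph $G=(V,E)$ is a connected spanning subgraph of $G_\epsilon(T)$. The link position $\phi_{ij}$ is the point of $C_i$ closest to $C_j$. A schedule is $G$-synchronized if for every $\{i,j\}\in E$ the robot on $C_i$ is at $\phi_{ij}$ exactly when the robot on $C_j$ is at $\phi_{ji}$. An SCS with communication graph $G$ consists of $n$ robots, one per circle, moving under a $G$-synchronized schedule with $g(C_i)=-g(C_j)$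 for all $\{i,j\}\in E$. Shifting protocol: when a robot on $C_i$ reaches $\phi_{ij}$ and there is no robot at $\phi_{ji}$, it moves to $C_j$ and thereafter follows the schedule of $C_j$. An $m$-partial SCS is obtained by removing $n-m$ robots, the remaining $m$ applying the shifting protocol. A surviving robot starves if every time it arrives at a link position the corresponding neighbor is absent. A ring is the closed path traversed by a starving robot (following the assigned direction on each circle and always shifting to the neighboring circle at link positions); rings are pairwise disjoint, and ring lengths are positive integer multiples of $2\pi$. The length of a path along a ring is the total length of circle arcs it traverses, counted with multiplicity and ignoring transitions between circles. A path in a ring from $p$ to $q$ follows the ring's travel direction and may include full tours; it is simple if it contains no full tour. The crossing point of neighboring circles $C_i,C_j$ is the midpoint of the segment joining $\phi_{ij}$ and $\phi_{ji}$. A robot $u'$ in ring $r'$ prevents a robot $u$ in ring $r$ from starving if there is a crossing point $c$ between $r$ and $r'$ and two paths of equal length, one from the position of $u$ to $c$ in $r$ and one from the position of $u'$ to $c$ in $r'$ (each possibly longer than the ring); this relation is symmetric. *)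

theory Defs
  imports Complex_Main
begin

text \<open>Circles C_0, ..., C_(n-1) are unit circles with centres z i (in the complex plane).
  A schedule is given by f (initial angle) and g (direction, 1 or -1).\<close>

definition potential_links :: "nat \<Rightarrow> (nat \<Rightarrow> complex) \<Rightarrow> real \<Rightarrow> (nat \<times> nat) set" where
  "potential_links n z eps =
     {(i, j). i < n \<and> j < n \<and> i \<noteq> j \<and> cmod (z i - z j) \<le> 2 + eps}"

definition pos :: "(nat \<Rightarrow> complex) \<Rightarrow> (nat \<Rightarrow> real) \<Rightarrow> (nat \<Rightarrow> int) \<Rightarrow> nat \<Rightarrow> real \<Rightarrow> complex" where
  "pos z f g i t = z i + cis (f i + 2 * pi * of_int (g i) * t)"

text \<open>Link position phi_ij: the point of C_i closest to C_j.\<close>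
definition linkpt :: "(nat \<Rightarrow> complex) \<Rightarrow> nat \<Rightarrow> nat \<Rightarrow> complex" where
  "linkpt z i j = z i + (z j - z i) / complex_of_real (cmod (z j - z i))"

definition at_link :: "(nat \<Rightarrow> complex) \<Rightarrow> (nat \<Rightarrow> real) \<Rightarrow> (nat \<Rightarrow> int) \<Rightarrow> nat \<Rightarrow> nat \<Rightarrow> real \<Rightarrow> bool" where
  "at_link z f g i j t \<longleftrightarrow> pos z f g i t = linkpt z i j"

definition crossing :: "(nat \<Rightarrow> complex) \<Rightarrow> nat \<Rightarrow> nat \<Rightarrow> complex" where
  "crossing z i j = (linkpt z i j + linkpt z j i) / 2"

definition SCS :: "nat \<Rightarrow> (nat \<Rightarrow> complex) \<Rightarrow> real \<Rightarrow> (nat \<times> nat) set \<Rightarrow>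
    (nat \<Rightarrow> real) \<Rightarrow> (nat \<Rightarrow> int) \<Rightarrow> bool" where
  "SCS n z eps E f g \<longleftrightarrow>
     (\<forall>i<n. \<forall>j<n. i \<noteq> j \<longrightarrow> cmod (z i - z j) > 2) \<and>
     eps < 1/2 \<and>
     (\<forall>i<n. \<forall>j<n. (i, j) \<in> (potential_links n z eps)\<^sup>*) \<and>
     E \<subseteq> potential_links n z eps \<and> sym E \<and>
     (\<forall>i<n. \<forall>j<n. (i, j) \<in> E\<^sup>*) \<and>
     (\<forall>i<n. 0 \<le> f i \<and> f i < 2 * pi \<and> (g i = 1 \<or> g i = -1)) \<and>
     (\<forall>(i, j)\<in>E. \<forall>t. at_link z f g i j t \<longleftrightarrow> at_link z f g j i t) \<and>
     (\<forall>(i, j)\<in>E. g i = - g j)"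

text \<open>Dynamics of a starving robot (always shifting at link positions).
  A state (k, t) means: the robot is on circle k at time t (having arrived at
  time t if t is a shifting time).\<close>
definition next_time :: "(nat \<Rightarrow> complex) \<Rightarrow> (nat \<times> nat) set \<Rightarrow> (nat \<Rightarrow> real) \<Rightarrow> (nat \<Rightarrow> int)
    \<Rightarrow> nat \<Rightarrow> real \<Rightarrow> real" where
  "next_time z E f g k t = (LEAST t'. t < t' \<and> (\<exists>j. (k, j) \<in> E \<and> at_link z f g k j t'))"

definition next_circ :: "(nat \<Rightarrow> complex) \<Rightarrow> (nat \<times> nat) set \<Rightarrow> (nat \<Rightarrow> real) \<Rightarrow> (nat \<Rightarrow> int)
    \<Rightarrow> nat \<Rightarrow> real \<Rightarrow> nat" where
  "next_circ z E f g k t = (THE j. (k, j) \<in> E \<and> at_link z f g k j (next_time z E f g k t))"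

definition ring_step :: "(nat \<Rightarrow> complex) \<Rightarrow> (nat \<times> nat) set \<Rightarrow> (nat \<Rightarrow> real) \<Rightarrow> (nat \<Rightarrow> int)
    \<Rightarrow> nat \<times> real \<Rightarrow> nat \<times> real" where
  "ring_step z E f g = (\<lambda>(k, t). (next_circ z E f g k t, next_time z E f g k t))"

definition traj :: "(nat \<Rightarrow> complex) \<Rightarrow> (nat \<times> nat) set \<Rightarrow> (nat \<Rightarrow> real) \<Rightarrow> (nat \<Rightarrow> int)
    \<Rightarrow> nat \<Rightarrow> real \<Rightarrow> nat \<Rightarrow> nat \<times> real" where
  "traj z E f g i t0 m = (ring_step z E f g ^^ m) (i, t0)"

definition on_circ_at :: "(nat \<Rightarrow> complex) \<Rightarrow> (nat \<times> nat) set \<Rightarrow> (nat \<Rightarrow> real) \<Rightarrow> (nat \<Rightarrow> int)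
    \<Rightarrow> nat \<Rightarrow> real \<Rightarrow> real \<Rightarrow> nat \<Rightarrow> bool" where
  "on_circ_at z E f g i t0 tau k \<longleftrightarrow>
     (\<exists>m. fst (traj z E f g i t0 m) = k \<and> snd (traj z E f g i t0 m) \<le> tau
          \<and> tau < snd (traj z E f g i t0 (Suc m)))"

text \<open>The ring through the position (circle i at time t0), as a set of points
  (circle, phase); the point of circle k with phase frac tau is pos z f g k tau.\<close>
definition ring :: "(nat \<Rightarrow> complex) \<Rightarrow> (nat \<times> nat) set \<Rightarrow> (nat \<Rightarrow> real) \<Rightarrow> (nat \<Rightarrow> int)
    \<Rightarrow> nat \<Rightarrow> real \<Rightarrow> (nat \<times> real) set" where
  "ring z E f g i t0 = {(k, frac tau) | k tau. t0 \<le> tau \<and> on_circ_at z E f g i t0 tau k}"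

definition ring_len :: "(nat \<Rightarrow> complex) \<Rightarrow> (nat \<times> nat) set \<Rightarrow> (nat \<Rightarrow> real) \<Rightarrow> (nat \<Rightarrow> int)
    \<Rightarrow> nat \<Rightarrow> real \<Rightarrow> real" where
  "ring_len z E f g i t0 =
     2 * pi * real (LEAST l::nat. 0 < l \<and> on_circ_at z E f g i t0 (t0 + real l) i)"

text \<open>Lengths of all paths (possibly with full tours) along the ring from the
  position (circle i at time t0) to the point c, where c is passed when
  shifting between two circles whose crossing point is c.  Since robots move
  with angular speed 2 pi, arc length equals 2 pi times elapsed time.\<close>
definition path_lens :: "(nat \<Rightarrow> complex) \<Rightarrow> (nat \<times> nat) set \<Rightarrow> (nat \<Rightarrow> real) \<Rightarrow> (nat \<Rightarrow> int)
    \<Rightarrow> nat \<Rightarrow> real \<Rightarrow> complex \<Rightarrow> real set" where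
  "path_lens z E f g i t0 c =
     {L. \<exists>m. snd (traj z E f g i t0 (Suc m)) = t0 + L / (2 * pi) \<and>
            crossing z (fst (traj z E f g i t0 m)) (fst (traj z E f g i t0 (Suc m))) = c}"

text \<open>Length of the simple path (no full tour) = the shortest such path.\<close>
definition simple_dist :: "(nat \<Rightarrow> complex) \<Rightarrow> (nat \<times> nat) set \<Rightarrow> (nat \<Rightarrow> real) \<Rightarrow> (nat \<Rightarrow> int)
    \<Rightarrow> nat \<Rightarrow> real \<Rightarrow> complex \<Rightarrow> real" where
  "simple_dist z E f g i t0 c = (LEAST L. L \<in> path_lens z E f g i t0 c)"

definition crossing_between :: "(nat \<Rightarrow> complex) \<Rightarrow> (nat \<times> nat) set \<Rightarrow> (nat \<Rightarrow> real) \<Rightarrow> (nat \<Rightarrow> int)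
    \<Rightarrow> nat \<Rightarrow> nat \<Rightarrow> real \<Rightarrow> complex \<Rightarrow> bool" where
  "crossing_between z E f g i i' t0 c \<longleftrightarrow>
     (\<exists>a b. (a, b) \<in> E \<and> c = crossing z a b) \<and>
     path_lens z E f g i t0 c \<noteq> {} \<and> path_lens z E f g i' t0 c \<noteq> {}"

definition prevents_via :: "(nat \<Rightarrow> complex) \<Rightarrow> (nat \<times> nat) set \<Rightarrow> (nat \<Rightarrow> real) \<Rightarrow> (nat \<Rightarrow> int)
    \<Rightarrow> nat \<Rightarrow> nat \<Rightarrow> real \<Rightarrow> complex \<Rightarrow> bool" where
  "prevents_via z E f g i i' t0 c \<longleftrightarrow>
     (\<exists>L. L \<in> path_lens z E f g i t0 c \<and> L \<in> path_lens z E f g i' t0 c)"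

end

(* A starving robot moves deterministically and reversibly, and its state (circle and
   time modulo 1) takes finitely many values, so it returns to its start after an integer
   time; the least such time is the ring length l.  By the geometry of the circles a
   crossing point c belongs to a single edge, and the ring passes c along it once per
   period: a second passage in the same direction would be an earlier return, and one in
   the opposite direction would put the ring into a state of the other ring through c.
   So the path lengths from u to c are d + 2 pi l k (k = 0, 1, ...) and those from u' are
   d' + 2 pi l' k, where d - d' is in 2 pi Z since both robots pass the link positions of
   c at integer times apart.  By Bezout two such progressions meet iff
   gcd l l' divides (d - d') / (2 pi). *)

theory Submission
  imports Defs "HOL-Library.Real_Mod"
begin

lemma cis_add_2pi_int: "cis (x + 2 * pi * of_int q) = cis x"
  by (metis cis_mult cis_multiple_2pi Ints_of_int mult_1_right)

lemma parallelogram_law_complex: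
  fixes x y :: complex
  shows "(cmod (x + y))\<^sup>2 + (cmod (x - y))\<^sup>2 = 2 * ((cmod x)\<^sup>2 + (cmod y)\<^sup>2)"
  unfolding cmod_power2 by (simp add: power2_eq_square algebra_simps)

lemma common_midpoint_long_diagonal:
  fixes a b a' b' :: complex
  assumes "a + b = a' + b'" and "r < cmod (a - a')" and "r < cmod (a - b')" and "0 \<le> r"
  shows "2 * r\<^sup>2 < max (cmod (a - b)) (cmod (a' - b')) ^ 2"
proof -
  have diag: "a - b = (a - a') + (a - b')" "a' - b' = (a - b') - (a - a')"
    using assms(1) by (simp_all add: algebra_simps)
  have "4 * r\<^sup>2 < 2 * ((cmod (a - a'))\<^sup>2 + (cmod (a - b'))\<^sup>2)"
    using power_strict_mono[OF assms(2) assms(4), of 2] power_strict_mono[OF assms(3) assms(4), of 2]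
    by simp
  also have "\<dots> = (cmod ((a - a') + (a - b')))\<^sup>2 + (cmod ((a - a') - (a - b')))\<^sup>2"
    by (rule parallelogram_law_complex[symmetric])
  also have "\<dots> = (cmod (a - b))\<^sup>2 + (cmod (a' - b'))\<^sup>2"
    unfolding diag by (simp add: norm_minus_commute)
  also have "\<dots> \<le> 2 * max (cmod (a - b)) (cmod (a' - b')) ^ 2"
    by (simp add: max_def power_mono)
  finally show ?thesis by simp
qed

locale scs =
  fixes n :: nat and z :: "nat \<Rightarrow> complex" and eps :: real
    and E :: "(nat \<times> nat) set" and f :: "nat \<Rightarrow> real" and g :: "nat \<Rightarrow> int"
  assumes scs: "SCS n z eps E f g" and edges_nonempty: "E \<noteq> {}"
begin

lemma centre_dist_gt_2: "i < n \<Longrightarrow> j < n \<Longrightarrow> i \<noteq> j \<Longrightarrow> 2 < cmod (z i - z j)"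
  using scs unfolding SCS_def by blast

lemma centre_inj: "i < n \<Longrightarrow> j < n \<Longrightarrow> z i = z j \<Longrightarrow> i = j"
  using centre_dist_gt_2 by fastforce

lemma eps_less_half: "eps < 1/2"
  using scs unfolding SCS_def by blast

lemma edgeD: "(i, j) \<in> E \<Longrightarrow> i < n \<and> j < n \<and> i \<noteq> j \<and> cmod (z i - z j) \<le> 2 + eps"
  using scs unfolding SCS_def potential_links_def by blast

lemma edge_sym: "(i, j) \<in> E \<Longrightarrow> (j, i) \<in> E"
  using scs unfolding SCS_def sym_def by blast

lemma direction_cases: "i < n \<Longrightarrow> g i = 1 \<or> g i = -1"
  using scs unfolding SCS_def by blast

lemma at_link_sync: "(i, j) \<in> E \<Longrightarrow> at_link z f g i j t \<longleftrightarrow> at_link z f g j i t"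
  using scs unfolding SCS_def by blast

lemma edge_from: assumes "k < n" shows "\<exists>j. (k, j) \<in> E"
proof -
  obtain a b where "(a, b) \<in> E" using edges_nonempty by auto
  then obtain k' where k': "k' < n" "k' \<noteq> k" using edgeD by metis
  have "(k, k') \<in> E\<^sup>*" using scs assms k'(1) unfolding SCS_def by blast
  then show ?thesis using k'(2) by (metis converse_rtranclE)
qed

lemma linkpt_inj:
  assumes "(k, j) \<in> E" "(k, j') \<in> E" "linkpt z k j = linkpt z k j'"
  shows "j = j'"
proof (rule ccontr)
  assume "j \<noteq> j'"
  define r where "r = cmod (z j - z k)"
  define r' where "r' = cmod (z j' - z k)"
  have r: "2 < r" "r \<le> 2 + eps" and r': "2 < r'" "r' \<le> 2 + eps"
    using edgeD[OF assms(1)] edgeD[OF assms(2)] centre_dist_gt_2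
    unfolding r_def r'_def by (auto simp: norm_minus_commute)
  have "(z j - z k) / of_real r = (z j' - z k) / of_real r'"
    using assms(3) unfolding linkpt_def r_def r'_def by simp
  then have "z j - z j' = of_real (1 - r' / r) * (z j - z k)"
    using r r' by (simp add: field_simps)
  then have "cmod (z j - z j') = \<bar>1 - r' / r\<bar> * r"
    by (simp only: norm_mult norm_of_real r_def)
  also have "\<dots> = \<bar>r - r'\<bar>"
    using r by (simp add: abs_mult_pos[symmetric] field_simps)
  finally have "cmod (z j - z j') = \<bar>r - r'\<bar>" .
  moreover have "2 < cmod (z j - z j')"
    using centre_dist_gt_2 edgeD assms(1,2) \<open>j \<noteq> j'\<close> by blast
  ultimately show False using r r' eps_less_half by linarith
qed

lemma crossing_eq_midpoint: "(a, b) \<in> E \<Longrightarrow> crossing z a b = (z a + z b) / 2"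
  unfolding crossing_def linkpt_def by (simp add: norm_minus_commute diff_divide_distrib)

text \<open>Two edges of length below 5/2 with no common end point cannot share their midpoint:
  otherwise the four centres, pairwise more than 2 apart, would form a parallelogram
  with the edges as its diagonals.\<close>

lemma crossing_determines_edge:
  assumes "(a, b) \<in> E" "(a', b') \<in> E" "crossing z a b = crossing z a' b'"
  shows "(a' = a \<and> b' = b) \<or> (a' = b \<and> b' = a)"
proof -
  have sum: "z a + z b = z a' + z b'"
    using assms crossing_eq_midpoint by (metis divide_cancel_right zero_neq_numeral)
  have e: "a < n" "b < n" "cmod (z a - z b) \<le> 2 + eps" "a' < n" "b' < n"
    "cmod (z a' - z b') \<le> 2 + eps"
    using edgeD[OF assms(1)] edgeD[OF assms(2)] by auto
  show ?thesis
  proof (cases "a' = a \<or> a' = b \<or> b' = a \<or> b' = b")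
    case True
    then show ?thesis
      using sum centre_inj e by (elim disjE) (simp_all add: add.commute)
  next
    case False
    then have "2 < cmod (z a - z a')" "2 < cmod (z a - z b')"
      using centre_dist_gt_2 e by metis+
    then have "2 * 2\<^sup>2 < max (cmod (z a - z b)) (cmod (z a' - z b')) ^ 2"
      by (rule common_midpoint_long_diagonal[OF sum]) simp
    moreover have "max (cmod (z a - z b)) (cmod (z a' - z b')) ^ 2 \<le> (5/2)\<^sup>2"
      using e eps_less_half by (intro power_mono) (auto simp: le_max_iff_disj)
    ultimately show ?thesis by (simp add: power_divide)
  qed
qed


subsection \<open>Link times and the next shift\<close>

lemma at_link_iff_cis:
  "at_link z f g k j t \<longleftrightarrow>
     cis (f k + 2 * pi * of_int (g k) * t) = (z j - z k) / complex_of_real (cmod (z j - z k))"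
  unfolding at_link_def pos_def linkpt_def by auto

lemma at_link_add_int: "at_link z f g k j (t + of_int q) \<longleftrightarrow> at_link z f g k j t"
proof -
  have "f k + 2 * pi * of_int (g k) * (t + of_int q) =
      (f k + 2 * pi * of_int (g k) * t) + 2 * pi * of_int (g k * q)"
    by (simp add: algebra_simps)
  then show ?thesis unfolding at_link_iff_cis by (simp only: cis_add_2pi_int)
qed

lemma at_link_times_differ_by_int:
  assumes "k < n" "at_link z f g k j t" "at_link z f g k j t'"
  shows "\<exists>q::int. t' = t + of_int q"
proof -
  have "cis (f k + 2 * pi * of_int (g k) * t') = cis (f k + 2 * pi * of_int (g k) * t)"
    using assms(2,3) unfolding at_link_iff_cis by simp
  then have "cis ((f k + 2 * pi * of_int (g k) * t') - (f k + 2 * pi * of_int (g k) * t)) = 1"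
    by (simp only: cis_divide[symmetric]) simp
  then obtain m where "(f k + 2 * pi * of_int (g k) * t') - (f k + 2 * pi * of_int (g k) * t) =
      of_int m * (2 * pi)"
    using cis_eq_1_iff by blast
  then have "2 * pi * (of_int (g k) * (t' - t)) = 2 * pi * of_int m"
    by (simp add: algebra_simps)
  then have "of_int (g k) * (t' - t) = of_int m"
    by simp
  with direction_cases[OF assms(1)] show ?thesis
  proof (elim disjE)
    assume "g k = 1" "of_int (g k) * (t' - t) = of_int m"
    then show ?thesis by (intro exI[of _ m]) simp
  next
    assume "g k = -1" "of_int (g k) * (t' - t) = of_int m"
    then show ?thesis by (intro exI[of _ "-m"]) simp
  qed
qed

lemma at_link_exists: assumes "(k, j) \<in> E" shows "\<exists>t. at_link z f g k j t"
proof -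
  have k: "k < n" "z j - z k \<noteq> 0"
    using edgeD[OF assms] centre_inj by auto
  define x where "x = Arg (z j - z k)"
  have cx: "cis x = (z j - z k) / complex_of_real (cmod (z j - z k))"
    unfolding x_def using cis_Arg[OF k(2)]
    by (simp add: sgn_div_norm divide_inverse scaleR_conv_of_real mult.commute)
  have "2 * pi * of_int (g k) \<noteq> (0::real)" using direction_cases[OF k(1)] by auto
  then have "f k + 2 * pi * of_int (g k) * ((x - f k) / (2 * pi * of_int (g k))) = x"
    by (simp add: field_simps)
  then show ?thesis unfolding at_link_iff_cis using cx by metis
qed

definition link_times :: "nat \<Rightarrow> real set" where
  "link_times k = {t. \<exists>j. (k, j) \<in> E \<and> at_link z f g k j t}"

lemma link_times_add_int: "t + of_int q \<in> link_times k \<longleftrightarrow> t \<in> link_times k"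
  unfolding link_times_def using at_link_add_int by simp

abbreviation "nt \<equiv> next_time z E f g"
abbreviation "nc \<equiv> next_circ z E f g"
abbreviation "tr \<equiv> traj z E f g"

lemma next_time_eqI:
  assumes "t < x" "x \<in> link_times k" "\<And>t'. t < t' \<Longrightarrow> t' \<in> link_times k \<Longrightarrow> x \<le> t'"
  shows "nt k t = x"
  unfolding next_time_def by (rule Least_equality) (use assms in \<open>auto simp: link_times_def\<close>)

text \<open>The link times of a circle form finitely many cosets of the integers, one per
  neighbour, so there is a first one after any time.\<close>

lemma first_link_time_after:
  assumes "k < n"
  shows "\<exists>x. t < x \<and> x \<in> link_times k \<and> (\<forall>t'. t < t' \<longrightarrow> t' \<in> link_times k \<longrightarrow> x \<le> t')"
proof -
  define N where "N = {j. (k, j) \<in> E}"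
  have fin: "finite N" using edgeD by (intro finite_subset[of N "{..<n}"]) (auto simp: N_def)
  have ne: "N \<noteq> {}" unfolding N_def using edge_from[OF assms] by auto
  define th where "th j = (SOME t. at_link z f g k j t)" for j
  have th: "at_link z f g k j (th j)" if "j \<in> N" for j
    unfolding th_def by (rule someI_ex, rule at_link_exists) (use that N_def in simp)
  define first where "first j = th j + of_int (\<lfloor>t - th j\<rfloor> + 1)" for j
  have first_gt: "t < first j" for j unfolding first_def by linarith
  have first_link: "at_link z f g k j (first j)" if "j \<in> N" for j
    unfolding first_def using th[OF that] by (simp only: at_link_add_int)
  have first_le: "first j \<le> t'" if j: "j \<in> N" "t < t'" "at_link z f g k j t'" for j t'
  proof -
    obtain q where q: "t' = th j + of_int q"
      using at_link_times_differ_by_int[OF assms th[OF j(1)] j(3)] by blast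
    then have "t - th j < of_int q" using j(2) by simp
    then have "\<lfloor>t - th j\<rfloor> < q" by (simp add: floor_less_iff)
    then have "\<lfloor>t - th j\<rfloor> + 1 \<le> q" by simp
    then show ?thesis unfolding first_def q by simp
  qed
  have "Min (first ` N) \<in> first ` N" using fin ne by simp
  then obtain j0 where j0: "j0 \<in> N" "Min (first ` N) = first j0" by blast
  show ?thesis
  proof (intro exI conjI allI impI)
    show "t < Min (first ` N)" "Min (first ` N) \<in> link_times k"
      using first_gt first_link j0 N_def by (auto simp: link_times_def)
    fix t' assume "t < t'" "t' \<in> link_times k"
    then obtain j where j: "j \<in> N" "at_link z f g k j t'" unfolding link_times_def N_def by auto
    have "Min (first ` N) \<le> first j" using fin j(1) by simp
    also have "\<dots> \<le> t'" using first_le j \<open>t < t'\<close> by blast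
    finally show "Min (first ` N) \<le> t'" .
  qed
qed

lemma next_time:
  assumes "k < n"
  shows "t < nt k t" "nt k t \<in> link_times k" "\<And>t'. t < t' \<Longrightarrow> t' \<in> link_times k \<Longrightarrow> nt k t \<le> t'"
proof -
  obtain x where x: "t < x" "x \<in> link_times k" "\<And>t'. t < t' \<Longrightarrow> t' \<in> link_times k \<Longrightarrow> x \<le> t'"
    using first_link_time_after[OF assms, of t] by blast
  moreover have "nt k t = x" using next_time_eqI x by blast
  ultimately show "t < nt k t" "nt k t \<in> link_times k"
    "\<And>t'. t < t' \<Longrightarrow> t' \<in> link_times k \<Longrightarrow> nt k t \<le> t'" by auto
qed

lemma next_circ_unique: assumes "k < n" shows "\<exists>!j. (k, j) \<in> E \<and> at_link z f g k j (nt k t)"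
proof -
  obtain j where j: "(k, j) \<in> E" "at_link z f g k j (nt k t)"
    using next_time(2)[OF assms, of t] unfolding link_times_def by auto
  moreover have "j' = j" if "(k, j') \<in> E" "at_link z f g k j' (nt k t)" for j'
    using linkpt_inj j that unfolding at_link_def by metis
  ultimately show ?thesis by blast
qed

lemma next_circ:
  assumes "k < n" shows "(k, nc k t) \<in> E" "at_link z f g k (nc k t) (nt k t)"
  using theI'[OF next_circ_unique[OF assms, of t]] unfolding next_circ_def by auto

lemma next_circ_eqI:
  assumes "(k, j) \<in> E" "at_link z f g k j (nt k t)" shows "nc k t = j"
  using the1_equality[OF next_circ_unique] edgeD assms unfolding next_circ_def by blast

lemma next_time_add_int: assumes "k < n" shows "nt k (t + of_int q) = nt k t + of_int q"
proof (rule next_time_eqI)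
  show "t + of_int q < nt k t + of_int q" "nt k t + of_int q \<in> link_times k"
    using next_time(1,2)[OF assms] link_times_add_int by simp_all
  fix t' assume "t + of_int q < t'" "t' \<in> link_times k"
  then have "nt k t \<le> t' - of_int q"
    using next_time(3)[OF assms] link_times_add_int[of "t' - of_int q" q k] by simp
  then show "nt k t + of_int q \<le> t'" by simp
qed

lemma next_circ_add_int: assumes "k < n" shows "nc k (t + of_int q) = nc k t"
proof -
  have "at_link z f g k (nc k (t + of_int q)) (nt k t)"
    using next_circ(2)[OF assms, of "t + of_int q"] next_time_add_int[OF assms] at_link_add_int
    by simp
  then show ?thesis using next_circ_eqI next_circ(1)[OF assms] by metis
qed

lemma next_time_eq_before_next:
  assumes "k < n" "t \<le> t'" "t' < nt k t" shows "nt k t' = nt k t"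
  using assms next_time[OF assms(1)] by (intro next_time_eqI) auto

lemma next_circ_eq_before_next:
  assumes "k < n" "t \<le> t'" "t' < nt k t" shows "nc k t' = nc k t"
  unfolding next_circ_def using next_time_eq_before_next[OF assms] by simp

subsection \<open>Trajectories and their periodicity\<close>

abbreviation circ :: "nat \<Rightarrow> real \<Rightarrow> nat \<Rightarrow> nat" where
  "circ i t0 m \<equiv> fst (tr i t0 m)"

abbreviation stime :: "nat \<Rightarrow> real \<Rightarrow> nat \<Rightarrow> real" where
  "stime i t0 m \<equiv> snd (tr i t0 m)"

lemma traj_0: "tr i t0 0 = (i, t0)"
  unfolding traj_def by simp

lemma traj_Suc:
  "tr i t0 (Suc m) = (nc (circ i t0 m) (stime i t0 m), nt (circ i t0 m) (stime i t0 m))"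
  by (cases "tr i t0 m") (simp add: traj_def ring_step_def)

lemma traj_Suc_right: "tr k t (Suc m) = tr (nc k t) (nt k t) m"
  unfolding traj_def funpow_Suc_right by (simp add: ring_step_def)

lemma traj_restart: "tr (circ i t0 m) (stime i t0 m) j = tr i t0 (m + j)"
  unfolding traj_def by (simp add: funpow_add add.commute[of m j])

lemma circ_less: assumes "i < n" shows "circ i t0 m < n"
proof (induction m)
  case (Suc m)
  then show ?case using next_circ(1) edgeD traj_Suc by (metis fst_conv)
qed (simp add: traj_0 assms)

lemma traj_edge:
  assumes "i < n"
  shows "(circ i t0 m, circ i t0 (Suc m)) \<in> E"
    and "at_link z f g (circ i t0 m) (circ i t0 (Suc m)) (stime i t0 (Suc m))"
  using traj_Suc next_circ circ_less[OF assms] by simp_all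

lemma stime_strict_mono: assumes "i < n" shows "strict_mono (stime i t0)"
  unfolding strict_mono_Suc_iff using traj_Suc next_time(1) circ_less[OF assms] by simp

lemma stime_less_iff: "i < n \<Longrightarrow> stime i t0 m < stime i t0 m' \<longleftrightarrow> m < m'"
  using strict_mono_less[OF stime_strict_mono] .

lemma stime_le_iff: "i < n \<Longrightarrow> stime i t0 m \<le> stime i t0 m' \<longleftrightarrow> m \<le> m'"
  using strict_mono_less_eq[OF stime_strict_mono] .

lemma stime_Suc_le:
  assumes "i < n" "t' \<in> link_times (circ i t0 m)" "stime i t0 m < t'"
  shows "stime i t0 (Suc m) \<le> t'"
  using traj_Suc next_time(3) circ_less[OF assms(1)] assms by simp

text \<open>On arrival at a link position the neighbour's link position is occupied at the same
  time, so an arrival time is a link time of the new circle.\<close>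

lemma stime_Suc_link_time:
  assumes "i < n" shows "stime i t0 (Suc m) \<in> link_times (circ i t0 (Suc m))"
  using traj_edge[OF assms, of t0 m] at_link_sync edge_sym unfolding link_times_def by blast

lemma traj_add_int:
  assumes "k < n" shows "tr k (t + of_int q) m = (fst (tr k t m), snd (tr k t m) + of_int q)"
proof (induction m)
  case (Suc m)
  have "fst (tr k t m) < n" using circ_less assms by blast
  then show ?case
    unfolding traj_Suc[of k "t + of_int q"] traj_Suc[of k t] Suc
    using next_time_add_int next_circ_add_int by simp
qed (simp add: traj_0)

lemma traj_Suc_eq_before_next:
  assumes "k < n" "t \<le> t'" "t' < nt k t" shows "tr k t' (Suc m) = tr k t (Suc m)"
  unfolding traj_Suc_right
  using next_circ_eq_before_next[OF assms] next_time_eq_before_next[OF assms] by simp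

text \<open>The dynamics is reversible: the circle a robot arrives from is determined by the
  link position where it arrives, and the time it arrived on a circle is the last link time
  before its departure.\<close>

lemma predecessor_circ:
  assumes "i < n" "circ i t0 (Suc a) = circ i t0 (Suc b)"
    "stime i t0 (Suc b) = stime i t0 (Suc a) + of_int q"
  shows "circ i t0 a = circ i t0 b"
proof -
  define K where "K = circ i t0 (Suc a)"
  have ea: "(circ i t0 a, K) \<in> E" "at_link z f g K (circ i t0 a) (stime i t0 (Suc a))"
    using traj_edge[OF assms(1), of t0 a] at_link_sync unfolding K_def by auto
  have eb: "(circ i t0 b, K) \<in> E" "at_link z f g K (circ i t0 b) (stime i t0 (Suc a) + of_int q)"
    using traj_edge[OF assms(1), of t0 b] at_link_sync assms(2,3) unfolding K_def by auto
  have "linkpt z K (circ i t0 a) = linkpt z K (circ i t0 b)"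
    using ea(2) eb(2) at_link_add_int unfolding at_link_def by simp
  then show ?thesis using linkpt_inj edge_sym ea(1) eb(1) by blast
qed

lemma predecessor_state:
  assumes "i < n" "circ i t0 (Suc (Suc a)) = circ i t0 (Suc (Suc b))"
    "stime i t0 (Suc (Suc b)) = stime i t0 (Suc (Suc a)) + of_int q"
  shows "circ i t0 (Suc a) = circ i t0 (Suc b) \<and> stime i t0 (Suc b) = stime i t0 (Suc a) + of_int q"
proof
  show circ: "circ i t0 (Suc a) = circ i t0 (Suc b)" using predecessor_circ[OF assms] .
  let ?K = "circ i t0 (Suc a)" and ?T = "stime i t0"
  have la: "?T (Suc a) + of_int q \<in> link_times (circ i t0 (Suc b))"
    using stime_Suc_link_time[OF assms(1), of t0 a] link_times_add_int circ by simp
  have lb: "?T (Suc b) - of_int q \<in> link_times ?K"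
    using stime_Suc_link_time[OF assms(1), of t0 b] circ
      link_times_add_int[of "?T (Suc b) - of_int q" q]
    by simp
  have mono: "?T (Suc a) < ?T (Suc (Suc a))" "?T (Suc b) < ?T (Suc (Suc b))"
    using stime_less_iff[OF assms(1)] by blast+
  show "?T (Suc b) = ?T (Suc a) + of_int q"
  proof (rule ccontr)
    assume ne: "?T (Suc b) \<noteq> ?T (Suc a) + of_int q"
    show False
    proof (cases "?T (Suc a) < ?T (Suc b) - of_int q")
      case True
      then have "?T (Suc (Suc a)) \<le> ?T (Suc b) - of_int q"
        using stime_Suc_le[OF assms(1) lb] by blast
      then show False using mono assms(3) by simp
    next
      case False
      then have "?T (Suc b) < ?T (Suc a) + of_int q" using ne by simp
      then have "?T (Suc (Suc b)) \<le> ?T (Suc a) + of_int q"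
        using stime_Suc_le[OF assms(1) la] by blast
      then show False using mono assms(3) by simp
    qed
  qed
qed

lemma return_if_state_repeats:
  assumes "i < n"
  shows "a < b \<Longrightarrow> circ i t0 (Suc a) = circ i t0 (Suc b) \<Longrightarrow>
    stime i t0 (Suc b) = stime i t0 (Suc a) + of_int q \<Longrightarrow> on_circ_at z E f g i t0 (t0 + of_int q) i"
proof (induction a arbitrary: b)
  case 0
  let ?T = "stime i t0"
  obtain b' where b': "b = Suc b'" using 0(1) by (cases b) auto
  have cb: "circ i t0 b = i" using predecessor_circ[OF assms 0(2,3)] traj_0 by simp
  have "?T 0 < ?T (Suc 0)" "?T b < ?T (Suc b)"
    using stime_less_iff[OF assms] by blast+
  then have mono: "t0 < ?T (Suc 0)" "?T b < ?T (Suc b)" using traj_0 by simp_all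
  have "?T b \<le> t0 + of_int q"
  proof (rule ccontr)
    assume "\<not> ?T b \<le> t0 + of_int q"
    moreover have "?T b - of_int q \<in> link_times (circ i t0 0)"
      using stime_Suc_link_time[OF assms, of t0 b'] b' cb traj_0
        link_times_add_int[of "?T b - of_int q" q i]
      by simp
    ultimately have "?T (Suc 0) \<le> ?T b - of_int q" using stime_Suc_le[OF assms] traj_0 by simp
    then show False using mono 0(3) by simp
  qed
  moreover have "t0 + of_int q < ?T (Suc b)" using mono 0(3) by simp
  ultimately show ?case unfolding on_circ_at_def using cb by blast
next
  case (Suc a)
  obtain b' where b': "b = Suc b'" using Suc(2) by (cases b) auto
  have "circ i t0 (Suc a) = circ i t0 (Suc b') \<and>
      stime i t0 (Suc b') = stime i t0 (Suc a) + of_int q"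
    using predecessor_state[OF assms] Suc.prems(2,3) unfolding b' by blast
  then show ?case using Suc.IH[of b'] Suc.prems(1) b' by simp
qed

lemma state_repeats:
  assumes "i < n"
  obtains a b q where "a < b" "circ i t0 (Suc a) = circ i t0 (Suc b)"
    "stime i t0 (Suc b) = stime i t0 (Suc a) + of_int q"
proof -
  define h where "h m = (circ i t0 m, circ i t0 (Suc m))" for m
  have "h ` {..n * n} \<subseteq> {..<n} \<times> {..<n}" unfolding h_def using circ_less[OF assms] by auto
  then have "card (h ` {..n * n}) \<le> card ({..<n} \<times> {..<n})" by (intro card_mono) simp_all
  also have "\<dots> < card {..n * n}" by (simp add: card_cartesian_product)
  finally have "\<not> inj_on h {..n * n}" using pigeonhole by blast
  then obtain x y where "x \<noteq> y" "h x = h y" unfolding inj_on_def by blast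
  then obtain a b where ab: "a < b" "h a = h b"
    using linorder_neqE_nat by (metis (no_types))
  have "at_link z f g (circ i t0 a) (circ i t0 (Suc a)) (stime i t0 (Suc b))"
    using traj_edge(2)[OF assms, of t0 b] ab(2) unfolding h_def by simp
  then obtain q where "stime i t0 (Suc b) = stime i t0 (Suc a) + of_int q"
    using at_link_times_differ_by_int[OF circ_less[OF assms] traj_edge(2)[OF assms]] by blast
  moreover have "circ i t0 (Suc a) = circ i t0 (Suc b)" using ab(2) unfolding h_def by simp
  ultimately show thesis using that ab(1) by blast
qed

definition returns_after :: "nat \<Rightarrow> real \<Rightarrow> nat \<Rightarrow> bool" where
  "returns_after i t0 l \<longleftrightarrow> 0 < l \<and> on_circ_at z E f g i t0 (t0 + real l) i"

lemma returns_after_exists: assumes "i < n" shows "\<exists>l. returns_after i t0 l"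
proof -
  obtain a b q where abq: "a < b" "circ i t0 (Suc a) = circ i t0 (Suc b)"
    "stime i t0 (Suc b) = stime i t0 (Suc a) + of_int q"
    using state_repeats[OF assms] by blast
  have "0 < q" using abq stime_less_iff[OF assms, of t0 "Suc a" "Suc b"] by simp
  moreover have "on_circ_at z E f g i t0 (t0 + of_int q) i"
    using return_if_state_repeats[OF assms abq] .
  ultimately show ?thesis unfolding returns_after_def by (intro exI[of _ "nat q"]) simp
qed

lemma ring_len_least_return:
  assumes "i < n" "ring_len z E f g i t0 = 2 * pi * real l"
  shows "returns_after i t0 l" "\<And>l'. returns_after i t0 l' \<Longrightarrow> l \<le> l'"
proof -
  have least: "(LEAST l. returns_after i t0 l) = l"
    using assms(2) unfolding ring_len_def returns_after_def by simp
  show "returns_after i t0 l"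
    using LeastI_ex[OF returns_after_exists[OF assms(1), of t0]] unfolding least .
  show "l \<le> l'" if "returns_after i t0 l'" for l'
    using Least_le[of "returns_after i t0" l'] that unfolding least .
qed

lemma traj_periodic:
  assumes "i < n" "returns_after i t0 l"
  obtains P where "0 < P" "stime i t0 P \<le> t0 + real l"
    "\<And>m. circ i t0 (P + m) = circ i t0 m"
    "\<And>m. tr i t0 (P + Suc m) = (circ i t0 (Suc m), stime i t0 (Suc m) + real l)"
proof -
  obtain P where P: "circ i t0 P = i" "stime i t0 P \<le> t0 + real l"
    "t0 + real l < stime i t0 (Suc P)"
    using assms(2) unfolding returns_after_def on_circ_at_def by blast
  have next_P: "nt i (stime i t0 P) = stime i t0 (Suc P)" using traj_Suc[of i t0 P] P(1) by simp
  have shift: "tr i t0 (P + Suc m) = (circ i t0 (Suc m), stime i t0 (Suc m) + real l)" for m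
  proof -
    have "tr i t0 (P + Suc m) = tr i (stime i t0 P) (Suc m)"
      using traj_restart[of i t0 P "Suc m"] P(1) by simp
    also have "\<dots> = tr i (t0 + of_int (int l)) (Suc m)"
      using traj_Suc_eq_before_next[OF assms(1) P(2)] P(3) next_P by simp
    also have "\<dots> = (circ i t0 (Suc m), stime i t0 (Suc m) + real l)"
      using traj_add_int[OF assms(1), of t0 "int l" "Suc m"] by simp
    finally show ?thesis .
  qed
  have "P \<noteq> 0"
  proof
    assume "P = 0"
    then have "stime i t0 (Suc 0) = stime i t0 (Suc 0) + real l"
      using arg_cong[OF shift[of 0], of snd] by simp
    then show False using assms(2) unfolding returns_after_def by simp
  qed
  moreover have "circ i t0 (P + m) = circ i t0 m" for m
    using P(1) shift traj_0 by (cases m) auto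
  ultimately show thesis using that P(2) shift by blast
qed

lemma on_circ_at_add_period:
  assumes "i < n" "returns_after i t0 l" "on_circ_at z E f g i t0 tau k"
  shows "on_circ_at z E f g i t0 (tau + real l) k"
proof -
  obtain P where P: "0 < P" "stime i t0 P \<le> t0 + real l" "\<And>m. circ i t0 (P + m) = circ i t0 m"
    "\<And>m. tr i t0 (P + Suc m) = (circ i t0 (Suc m), stime i t0 (Suc m) + real l)"
    using traj_periodic[OF assms(1,2)] by blast
  obtain m where m: "circ i t0 m = k" "stime i t0 m \<le> tau" "tau < stime i t0 (Suc m)"
    using assms(3) unfolding on_circ_at_def by blast
  have "stime i t0 (P + m) \<le> tau + real l"
    using P(2) P(4)[of "m - 1"] m(2) traj_0 by (cases m) auto
  moreover have "tau + real l < stime i t0 (Suc (P + m))"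
    using P(4)[of m] m(3) by simp
  ultimately show ?thesis unfolding on_circ_at_def using P(3) m(1) by blast
qed

lemma on_circ_at_add_periods:
  assumes "i < n" "returns_after i t0 l" "on_circ_at z E f g i t0 tau k"
  shows "on_circ_at z E f g i t0 (tau + real l * real K) k"
proof (induction K)
  case (Suc K)
  then show ?case using on_circ_at_add_period[OF assms(1,2) Suc] by (simp add: algebra_simps)
qed (simp add: assms(3))

lemma traj_from_shared_state:
  assumes "i < n" "circ i t0 m = circ i' t0' m'" "stime i' t0' m' = stime i t0 m + of_int q"
  shows "tr i' t0' (m' + j) = (circ i t0 (m + j), stime i t0 (m + j) + of_int q)"
proof -
  have "tr i' t0' (m' + j) = tr (circ i t0 m) (stime i t0 m + of_int q) j"
    using traj_restart[of i' t0' m' j] assms(2,3) by simp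
  also have "\<dots> = (circ i t0 (m + j), stime i t0 (m + j) + of_int q)"
    using traj_add_int[OF circ_less[OF assms(1)]] traj_restart by simp
  finally show ?thesis .
qed

text \<open>Every point of the ring through (i, t0) is visited again after any given time,
  since the robot returns after a period; from a shared state the second robot replays
  the first one's trajectory shifted by an integer time, which keeps the phase.\<close>

lemma ring_subset_if_shared_state:
  assumes "i < n" "i' < n" "circ i t0 m = circ i' t0' m'"
    "stime i' t0' m' = stime i t0 m + of_int q"
  shows "ring z E f g i t0 \<subseteq> ring z E f g i' t0'"
proof
  fix x assume "x \<in> ring z E f g i t0"
  then obtain k tau where x: "x = (k, frac tau)" "t0 \<le> tau" "on_circ_at z E f g i t0 tau k"
    unfolding ring_def by blast
  obtain l where l: "returns_after i t0 l" using returns_after_exists[OF assms(1)] by blast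
  then have "0 < real l" unfolding returns_after_def by simp
  then obtain K :: nat where K: "stime i t0 m - tau < real K * real l"
    using reals_Archimedean3 by blast
  define sg where "sg = tau + real l * real K"
  have sg: "stime i t0 m \<le> sg" unfolding sg_def using K by (simp add: algebra_simps)
  have "on_circ_at z E f g i t0 sg k" unfolding sg_def
    using on_circ_at_add_periods[OF assms(1) l x(3)] .
  then obtain m0 where m0: "circ i t0 m0 = k" "stime i t0 m0 \<le> sg" "sg < stime i t0 (Suc m0)"
    unfolding on_circ_at_def by blast
  have "m \<le> m0" using sg m0(3) stime_le_iff[OF assms(1), of t0 "Suc m0" m] by linarith
  then obtain j where j: "m0 = m + j" using le_Suc_ex by blast
  have "on_circ_at z E f g i' t0' (sg + of_int q) k"
    unfolding on_circ_at_def
    using traj_from_shared_state[OF assms(1,3,4), of j]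
      traj_from_shared_state[OF assms(1,3,4), of "Suc j"] j m0
    by (intro exI[of _ "m' + j"]) simp
  moreover have "t0' \<le> sg + of_int q"
    using stime_le_iff[OF assms(2), of t0' 0 m'] traj_0 assms(4) sg by simp
  ultimately have "(k, frac (sg + of_int q)) \<in> ring z E f g i' t0'" unfolding ring_def by blast
  moreover have "sg + of_int q = tau + of_int (int (l * K) + q)" unfolding sg_def by simp
  ultimately show "x \<in> ring z E f g i' t0'" using x(1) by (simp only: frac_add_of_int_right)
qed

lemma ring_eq_if_shared_state:
  assumes "i < n" "i' < n" "circ i t0 m = circ i' t0' m'"
    "stime i' t0' m' = stime i t0 m + of_int q"
  shows "ring z E f g i t0 = ring z E f g i' t0'"
proof
  show "ring z E f g i t0 \<subseteq> ring z E f g i' t0'" using ring_subset_if_shared_state[OF assms] .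
  have "stime i t0 m = stime i' t0' m' + of_int (- q)" using assms(4) by simp
  then show "ring z E f g i' t0' \<subseteq> ring z E f g i t0"
    using ring_subset_if_shared_state[OF assms(2,1) assms(3)[symmetric]] by blast
qed

subsection \<open>Passages through a crossing point\<close>

definition passes_crossing :: "nat \<Rightarrow> real \<Rightarrow> complex \<Rightarrow> nat \<Rightarrow> bool" where
  "passes_crossing i t0 c m \<longleftrightarrow> crossing z (circ i t0 m) (circ i t0 (Suc m)) = c"

lemma passes_crossing_same_edge:
  assumes "i < n" "i' < n" "passes_crossing i t0 c m" "passes_crossing i' t0' c m'"
  shows "(circ i' t0' m' = circ i t0 m \<and> circ i' t0' (Suc m') = circ i t0 (Suc m)) \<or>
      (circ i' t0' m' = circ i t0 (Suc m) \<and> circ i' t0' (Suc m') = circ i t0 m)"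
    and "\<exists>q. stime i' t0' (Suc m') = stime i t0 (Suc m) + of_int q"
proof -
  have e: "(circ i t0 m, circ i t0 (Suc m)) \<in> E" "(circ i' t0' m', circ i' t0' (Suc m')) \<in> E"
    using traj_edge(1)[OF assms(1)] traj_edge(1)[OF assms(2)] by blast+
  show edge: "(circ i' t0' m' = circ i t0 m \<and> circ i' t0' (Suc m') = circ i t0 (Suc m)) \<or>
      (circ i' t0' m' = circ i t0 (Suc m) \<and> circ i' t0' (Suc m') = circ i t0 m)"
    using crossing_determines_edge[OF e] assms(3,4) unfolding passes_crossing_def by simp
  have arrival: "at_link z f g (circ i' t0' m') (circ i' t0' (Suc m')) (stime i' t0' (Suc m'))"
    using traj_edge(2)[OF assms(2)] .
  from edge have "at_link z f g (circ i t0 m) (circ i t0 (Suc m)) (stime i' t0' (Suc m'))"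
  proof
    assume "circ i' t0' m' = circ i t0 (Suc m) \<and> circ i' t0' (Suc m') = circ i t0 m"
    then show ?thesis using arrival at_link_sync[OF e(1)] by simp
  qed (use arrival in simp)
  then show "\<exists>q. stime i' t0' (Suc m') = stime i t0 (Suc m) + of_int q"
    using at_link_times_differ_by_int[OF circ_less[OF assms(1)] traj_edge(2)[OF assms(1)]] by blast
qed

text \<open>A second passage of the ring through c in the same direction is a return of the robot.
  One in the opposite direction is impossible: the other ring passes through c in one of
  the two directions and would share a state with this ring.\<close>

lemma passes_crossing_again:
  assumes "i < n" "i' < n" "ring z E f g i t0 \<noteq> ring z E f g i' t0'"
    "passes_crossing i' t0' c m'" "passes_crossing i t0 c a" "passes_crossing i t0 c b" "a < b"
  obtains q where "stime i t0 (Suc b) = stime i t0 (Suc a) + of_int q" "returns_after i t0 (nat q)"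
proof -
  obtain q where q: "stime i t0 (Suc b) = stime i t0 (Suc a) + of_int q"
    using passes_crossing_same_edge(2)[OF assms(1,1,5,6)] by blast
  have "0 < q" using q stime_less_iff[OF assms(1), of t0 "Suc a" "Suc b"] assms(7) by simp
  have no_shared: False
    if "circ i t0 (Suc m) = circ i' t0' (Suc m')"
      "stime i' t0' (Suc m') = stime i t0 (Suc m) + of_int p"
    for m p
    using ring_eq_if_shared_state[OF assms(1,2) that] assms(3) by blast
  obtain qa where qa: "stime i' t0' (Suc m') = stime i t0 (Suc a) + of_int qa"
    using passes_crossing_same_edge(2)[OF assms(1,2,5,4)] by blast
  obtain qb where qb: "stime i' t0' (Suc m') = stime i t0 (Suc b) + of_int qb"
    using passes_crossing_same_edge(2)[OF assms(1,2,6,4)] by blast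
  from passes_crossing_same_edge(1)[OF assms(1,1,5,6)]
  have "circ i t0 (Suc a) = circ i t0 (Suc b)"
  proof
    assume rev: "circ i t0 b = circ i t0 (Suc a) \<and> circ i t0 (Suc b) = circ i t0 a"
    from passes_crossing_same_edge(1)[OF assms(1,2,5,4)] show ?thesis
    proof
      assume "circ i' t0' m' = circ i t0 a \<and> circ i' t0' (Suc m') = circ i t0 (Suc a)"
      then show ?thesis using no_shared[of a qa] qa by auto
    next
      assume "circ i' t0' m' = circ i t0 (Suc a) \<and> circ i' t0' (Suc m') = circ i t0 a"
      then show ?thesis using no_shared[of b qb] qb rev by auto
    qed
  qed simp
  then have "on_circ_at z E f g i t0 (t0 + of_int q) i"
    using return_if_state_repeats[OF assms(1,7)] q by blast
  then have "returns_after i t0 (nat q)" unfolding returns_after_def using \<open>0 < q\<close> by simp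
  then show thesis using that q by blast
qed

lemma passes_crossing_times:
  assumes "i < n" "i' < n" "ring z E f g i t0 \<noteq> ring z E f g i' t0'"
    "ring_len z E f g i t0 = 2 * pi * real l" "passes_crossing i' t0' c M'"
    "passes_crossing i t0 c M" "\<And>m. passes_crossing i t0 c m \<Longrightarrow> M \<le> m"
  shows "passes_crossing i t0 c m \<Longrightarrow>
    \<exists>k::nat. stime i t0 (Suc m) = stime i t0 (Suc M) + real l * real k"
proof (induction m rule: less_induct)
  case (less m)
  note period = ring_len_least_return[OF assms(1,4)]
  obtain P where P: "0 < P" "stime i t0 P \<le> t0 + real l" "\<And>m. circ i t0 (P + m) = circ i t0 m"
    "\<And>m. tr i t0 (P + Suc m) = (circ i t0 (Suc m), stime i t0 (Suc m) + real l)"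
    using traj_periodic[OF assms(1) period(1)] by blast
  show ?case
  proof (cases "P \<le> m")
    case True
    then obtain m0 where m0: "m = P + m0" using le_Suc_ex by blast
    have "passes_crossing i t0 c m0"
      using less.prems P(3)[of m0] P(3)[of "Suc m0"] unfolding m0 passes_crossing_def by simp
    moreover have "m0 < m" using m0 P(1) by simp
    ultimately obtain k where "stime i t0 (Suc m0) = stime i t0 (Suc M) + real l * real k"
      using less.IH by blast
    then have "stime i t0 (Suc m) = stime i t0 (Suc M) + real l * real (Suc k)"
      using P(4)[of m0] m0 by (simp add: algebra_simps)
    then show ?thesis by blast
  next
    case False
    have "m = M"
    proof (rule ccontr)
      assume "m \<noteq> M"
      then have "M < m" using assms(7)[OF less.prems] by simp
      then obtain q where q: "stime i t0 (Suc m) = stime i t0 (Suc M) + of_int q"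
        "returns_after i t0 (nat q)"
        using passes_crossing_again[OF assms(1-3,5,6) less.prems] by blast
      have "stime i t0 (Suc P) = stime i t0 (Suc 0) + real l" using P(4)[of 0] by simp
      also have "\<dots> \<le> stime i t0 (Suc M) + real (nat q)"
        using period(2)[OF q(2)] stime_le_iff[OF assms(1), of t0 "Suc 0" "Suc M"] by simp
      also have "\<dots> = stime i t0 (Suc m)" using q(1) q(2) unfolding returns_after_def by simp
      finally show False using stime_le_iff[OF assms(1), of t0 "Suc P" "Suc m"] False by simp
    qed
    then show ?thesis by (intro exI[of _ 0]) simp
  qed
qed

lemma passes_crossing_after_periods:
  assumes "i < n" "returns_after i t0 l" "passes_crossing i t0 c M"
  shows "\<exists>m. passes_crossing i t0 c m \<and> stime i t0 (Suc m) = stime i t0 (Suc M) + real l * real k"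
proof (induction k)
  case (Suc k)
  obtain P where P: "0 < P" "stime i t0 P \<le> t0 + real l" "\<And>m. circ i t0 (P + m) = circ i t0 m"
    "\<And>m. tr i t0 (P + Suc m) = (circ i t0 (Suc m), stime i t0 (Suc m) + real l)"
    using traj_periodic[OF assms(1,2)] by blast
  obtain m where m: "passes_crossing i t0 c m"
    "stime i t0 (Suc m) = stime i t0 (Suc M) + real l * real k"
    using Suc by blast
  have "passes_crossing i t0 c (P + m)"
    using m(1) P(3)[of m] P(3)[of "Suc m"] unfolding passes_crossing_def by simp
  moreover have "stime i t0 (Suc (P + m)) = stime i t0 (Suc M) + real l * real (Suc k)"
    using P(4)[of m] m(2) by (simp add: algebra_simps)
  ultimately show ?case by blast
qed (use assms(3) in auto)

lemma path_lens_iff: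
  "L \<in> path_lens z E f g i t0 c \<longleftrightarrow>
     (\<exists>m. passes_crossing i t0 c m \<and> L = 2 * pi * (stime i t0 (Suc m) - t0))"
proof -
  have "stime i t0 (Suc m) = t0 + L / (2 * pi) \<longleftrightarrow> L = 2 * pi * (stime i t0 (Suc m) - t0)" for m
    using pi_gt_zero by (auto simp: field_simps)
  then show ?thesis unfolding path_lens_def passes_crossing_def by auto
qed

lemma first_passage:
  assumes "i < n" "path_lens z E f g i t0 c \<noteq> {}"
  obtains M where "passes_crossing i t0 c M" "\<And>m. passes_crossing i t0 c m \<Longrightarrow> M \<le> m"
    "simple_dist z E f g i t0 c = 2 * pi * (stime i t0 (Suc M) - t0)"
proof -
  have "\<exists>m. passes_crossing i t0 c m" using assms(2) path_lens_iff by blast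
  then obtain M where M: "passes_crossing i t0 c M" "\<And>m. passes_crossing i t0 c m \<Longrightarrow> M \<le> m"
    using LeastI_ex Least_le by metis
  have "simple_dist z E f g i t0 c = 2 * pi * (stime i t0 (Suc M) - t0)"
    unfolding simple_dist_def
  proof (rule Least_equality)
    show "2 * pi * (stime i t0 (Suc M) - t0) \<in> path_lens z E f g i t0 c"
      using path_lens_iff M(1) by blast
    fix L assume "L \<in> path_lens z E f g i t0 c"
    then obtain m where m: "passes_crossing i t0 c m" "L = 2 * pi * (stime i t0 (Suc m) - t0)"
      using path_lens_iff by blast
    then show "2 * pi * (stime i t0 (Suc M) - t0) \<le> L"
      using M(2)[OF m(1)] stime_le_iff[OF assms(1), of t0 "Suc M" "Suc m"] by simp
  qed
  then show thesis using that M by blast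
qed

lemma path_lens_eq_progression:
  assumes "i < n" "i' < n" "ring z E f g i t0 \<noteq> ring z E f g i' t0'"
    "ring_len z E f g i t0 = 2 * pi * real l"
    "path_lens z E f g i t0 c \<noteq> {}" "path_lens z E f g i' t0' c \<noteq> {}"
  shows "path_lens z E f g i t0 c =
    range (\<lambda>k::nat. simple_dist z E f g i t0 c + 2 * pi * real l * real k)"
proof (intro set_eqI iffI)
  obtain M where M: "passes_crossing i t0 c M" "\<And>m. passes_crossing i t0 c m \<Longrightarrow> M \<le> m"
    "simple_dist z E f g i t0 c = 2 * pi * (stime i t0 (Suc M) - t0)"
    using first_passage[OF assms(1,5)] by blast
  obtain M' where M': "passes_crossing i' t0' c M'" using assms(6) path_lens_iff by blast
  {
    fix L assume "L \<in> path_lens z E f g i t0 c"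
    then obtain m where m: "passes_crossing i t0 c m" "L = 2 * pi * (stime i t0 (Suc m) - t0)"
      using path_lens_iff by blast
    then obtain k :: nat where "stime i t0 (Suc m) = stime i t0 (Suc M) + real l * real k"
      using passes_crossing_times[OF assms(1-4) M' M(1,2)] by blast
    then have "L = simple_dist z E f g i t0 c + 2 * pi * real l * real k"
      using m(2) M(3) by (simp add: algebra_simps)
    then show "L \<in> range (\<lambda>k::nat. simple_dist z E f g i t0 c + 2 * pi * real l * real k)" by blast
  next
    fix L assume "L \<in> range (\<lambda>k::nat. simple_dist z E f g i t0 c + 2 * pi * real l * real k)"
    then obtain k :: nat where L: "L = simple_dist z E f g i t0 c + 2 * pi * real l * real k"
      by blast
    obtain m where m: "passes_crossing i t0 c m"
      "stime i t0 (Suc m) = stime i t0 (Suc M) + real l * real k"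
      using passes_crossing_after_periods[OF assms(1) ring_len_least_return(1)[OF assms(1,4)] M(1)]
      by blast
    have "L = 2 * pi * (stime i t0 (Suc m) - t0)" using L m(2) M(3) by (simp add: algebra_simps)
    then show "L \<in> path_lens z E f g i t0 c" using path_lens_iff m(1) by blast
  }
qed

lemma simple_dist_diff_int:
  assumes "i < n" "i' < n" "path_lens z E f g i t0 c \<noteq> {}" "path_lens z E f g i' t0 c \<noteq> {}"
  shows "\<exists>s::int. simple_dist z E f g i t0 c - simple_dist z E f g i' t0 c = 2 * pi * of_int s"
proof -
  obtain M where M: "passes_crossing i t0 c M"
    "simple_dist z E f g i t0 c = 2 * pi * (stime i t0 (Suc M) - t0)"
    using first_passage[OF assms(1,3)] by blast
  obtain M' where M': "passes_crossing i' t0 c M'"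
    "simple_dist z E f g i' t0 c = 2 * pi * (stime i' t0 (Suc M') - t0)"
    using first_passage[OF assms(2,4)] by blast
  obtain q where "stime i' t0 (Suc M') = stime i t0 (Suc M) + of_int q"
    using passes_crossing_same_edge(2)[OF assms(1,2) M(1) M'(1)] by blast
  then show ?thesis using M(2) M'(2) by (intro exI[of _ "- q"]) (simp add: algebra_simps)
qed

end

subsection \<open>Meeting arithmetic progressions\<close>

lemma nat_combination_iff_gcd_dvd:
  fixes l l' :: nat and s :: int
  assumes "0 < l" "0 < l'"
  shows "(\<exists>k k'::nat. s + int l * int k = int l' * int k') \<longleftrightarrow> int (gcd l l') dvd s"
proof
  assume "\<exists>k k'::nat. s + int l * int k = int l' * int k'"
  then obtain k k' :: nat where "s = int l' * int k' - int l * int k"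
    by (metis add_diff_cancel_right')
  then show "int (gcd l l') dvd s" by simp
next
  assume "int (gcd l l') dvd s"
  then obtain w where w: "s = int (gcd l l') * w" by blast
  obtain u v where "u * int l + v * int l' = int (gcd l l')"
    using bezout_int[of "int l" "int l'"] by (auto simp: gcd_int_def)
  then have "s = (u * int l + v * int l') * w" using w by (simp add: mult.commute)
  then have s: "s = (u * w) * int l + (v * w) * int l'" by (simp add: algebra_simps)
  text \<open>Shift the Bezout coefficients by a common multiple of l and l' to make them
    non-negative.\<close>
  define T where "T = \<bar>u * w\<bar> + \<bar>v * w\<bar>"
  define k where "k = int l' * T - u * w"
  define k' where "k' = v * w + int l * T"
  have "0 \<le> T" unfolding T_def by simp
  then have "T \<le> int l' * T" "T \<le> int l * T"
    using assms by (simp_all add: mult_le_cancel_right1)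
  then have "0 \<le> k" "0 \<le> k'" unfolding k_def k'_def T_def by linarith+
  moreover have "s + int l * k = int l' * k'" unfolding s k_def k'_def by (simp add: algebra_simps)
  ultimately have "s + int l * int (nat k) = int l' * int (nat k')" by simp
  then show "\<exists>k k'::nat. s + int l * int k = int l' * int k'" by blast
qed

lemma progressions_meet_iff_gcd_dvd:
  fixes l l' :: nat and s :: int and x x' w :: real
  assumes "0 < l" "0 < l'" "w \<noteq> 0" "x - x' = w * of_int s"
  shows "(\<exists>k k'::nat. x + w * real l * real k = x' + w * real l' * real k') \<longleftrightarrow> int (gcd l l') dvd s"
proof -
  have "x + w * real l * real k = x' + w * real l' * real k' \<longleftrightarrow> s + int l * int k = int l' * int k'"
    for k k' :: nat
  proof -
    have "x + w * real l * real k = x' + w * real l' * real k' \<longleftrightarrow>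
        w * (of_int s + real l * real k) = w * (real l' * real k')"
      using assms(4) by (auto simp: algebra_simps)
    also have "\<dots> \<longleftrightarrow> of_int (s + int l * int k) = (of_int (int l' * int k') :: real)"
      using assms(3) by simp
    also have "\<dots> \<longleftrightarrow> s + int l * int k = int l' * int k'" by (rule of_int_eq_iff)
    finally show ?thesis .
  qed
  then show ?thesis using nat_combination_iff_gcd_dvd[OF assms(1,2)] by simp
qed

theorem theorem2:
  fixes n :: nat and z :: "nat \<Rightarrow> complex" and eps :: real
    and E :: "(nat \<times> nat) set" and f :: "nat \<Rightarrow> real" and g :: "nat \<Rightarrow> int"
    and i i' :: nat and t0 :: real and c :: complex and l l' :: nat
  assumes "SCS n z eps E f g"
    and "i < n" and "i' < n"
    and "ring z E f g i t0 \<noteq> ring z E f g i' t0"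
    and "crossing_between z E f g i i' t0 c"
    and "0 < l" and "ring_len z E f g i t0 = 2 * pi * real l"
    and "0 < l'" and "ring_len z E f g i' t0 = 2 * pi * real l'"
  shows "(\<exists>s::int. simple_dist z E f g i t0 c - simple_dist z E f g i' t0 c = 2 * pi * of_int s)
       \<and> (\<forall>s::int. simple_dist z E f g i t0 c - simple_dist z E f g i' t0 c = 2 * pi * of_int s \<longrightarrow>
            (prevents_via z E f g i i' t0 c \<longleftrightarrow> int (gcd l l') dvd s))"
proof -
  obtain a b where "(a, b) \<in> E"
    and ne: "path_lens z E f g i t0 c \<noteq> {}" "path_lens z E f g i' t0 c \<noteq> {}"
    using assms(5) unfolding crossing_between_def by blast
  then interpret scs n z eps E f g using assms(1) by unfold_locales auto
  define d where "d = simple_dist z E f g i t0 c"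
  define d' where "d' = simple_dist z E f g i' t0 c"
  have "path_lens z E f g i t0 c = range (\<lambda>k::nat. d + 2 * pi * real l * real k)"
    unfolding d_def using path_lens_eq_progression[OF assms(2-4,7) ne] .
  moreover have "path_lens z E f g i' t0 c = range (\<lambda>k::nat. d' + 2 * pi * real l' * real k)"
    unfolding d'_def
    using path_lens_eq_progression[OF assms(3,2) assms(4)[symmetric] assms(9) ne(2,1)] .
  ultimately have "prevents_via z E f g i i' t0 c \<longleftrightarrow>
      (\<exists>k k'::nat. d + 2 * pi * real l * real k = d' + 2 * pi * real l' * real k')"
    unfolding prevents_via_def by auto
  then show ?thesis
    using simple_dist_diff_int[OF assms(2,3) ne]
      progressions_meet_iff_gcd_dvd[OF assms(6,8), of "2 * pi"]
    unfolding d_def d'_def by auto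
qed

end
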